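(* For an integer $k\ge1$ let $F_0(k)=0$, $F_1(k)=1$, $F_n(k)=kF_{n-1}(k)+F_{n-2}(k)$ for $n\ge2$, and for $n\ge2$ let $I_{k,n}(t)=\#(t\mathcal{T}\cap\mathbb{Z}^2)$ where $\mathcal{T}$ is the triangle with vertices $(0,0)$, $\left(\frac{F_{n-1}(k)}{F_n(k)},0\right)$ and $\left(0,\frac{F_n(k)}{F_{n-1}(k)}\right)$. Then for every $k\ge1$ and every even integer $n\ge2$, $F_n(k)$ is a common quasi-period of $I_{k,n}(t)$ and $I_{k,n+1}(t)$.
   Context: The Ehrhart function of a rational polygon is a quasipolynomial $\sum_i c_i(t)t^i$ with periodic coefficient functions $c_i$; an integer $N$ is a quasi-period if every $c_i$ is periodic with period $N$. *)

theory Defs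
  imports "HOL-Analysis.Analysis"
begin

fun F :: "nat \<Rightarrow> nat \<Rightarrow> nat" where
  "F k 0 = 0"
| "F k (Suc 0) = 1"
| "F k (Suc (Suc n)) = k * F k (Suc n) + F k n"

definition triangle :: "nat \<Rightarrow> nat \<Rightarrow> (real \<times> real) set" where
  "triangle k n = convex hull {(0, 0), (real (F k (n - 1)) / real (F k n), 0),
                               (0, real (F k n) / real (F k (n - 1)))}"

definition I :: "nat \<Rightarrow> nat \<Rightarrow> nat \<Rightarrow> nat" where
  "I k n t = card {p :: int \<times> int.
       (real_of_int (fst p), real_of_int (snd p)) \<in> (\<lambda>x. real t *\<^sub>R x) ` triangle k n}"

definition quasi_period :: "nat \<Rightarrow> (nat \<Rightarrow> real) \<Rightarrow> bool" where
  "quasi_period N f \<longleftrightarrow>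
     (\<exists>(d::nat) (c :: nat \<Rightarrow> nat \<Rightarrow> real).
        (\<forall>i t. c i (t + N) = c i t) \<and>
        (\<forall>t. f t = (\<Sum>i\<le>d. c i t * real t ^ i)))"

end

theory Submission
  imports Defs
begin

text \<open>
  Put \<open>a = F k n\<close>, \<open>b = F k (n - 1)\<close>, \<open>c = F k (n + 1)\<close>. For even \<open>n\<close>, Cassini's
  identity gives \<open>b c = a\<^sup>2 + 1\<close>, and \<open>b\<close>, \<open>c\<close> are coprime. The lattice points of the
  dilated triangle are the \<open>(x, y) \<ge> 0\<close> with \<open>a\<^sup>2 x + b\<^sup>2 y \<le> t a b\<close>. Passing from \<open>t\<close> to
  \<open>t + a\<close> adds a layer of points; each layer is the previous one translated by \<open>b\<close> in \<open>x\<close>,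
  together with its part where \<open>0 \<le> x < b\<close>, which \<open>(x, y) \<mapsto> c x + b y\<close> maps onto \<open>a\<^sup>2\<close>
  consecutive integers because \<open>a\<^sup>2 x + b\<^sup>2 y = b (c x + b y) - x\<close>. So the second difference
  of the counting function with step \<open>a\<close> is the constant \<open>a\<^sup>2\<close>, which forces a
  quasi-polynomial of degree 2 with quasi-period \<open>a\<close>. For \<open>n + 1\<close> the roles of \<open>b\<close> and \<open>c\<close>
  are exchanged.
\<close>

lemma F_pos: "k \<ge> 1 \<Longrightarrow> j \<ge> 1 \<Longrightarrow> F k j > 0"
proof (induction k j rule: F.induct)
  case (3 k n)
  then show ?case by (cases n) auto
qed auto

lemma F_cassini: "int (F k (j + 2)) * int (F k j) - int (F k (j + 1))^2 = (-1)^(j + 1)"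
proof (induction j)
  case (Suc j)
  have "int (F k (j + 3)) * int (F k (j + 1)) - int (F k (j + 2))^2
      = - (int (F k (j + 2)) * int (F k j) - int (F k (j + 1))^2)"
    by (simp add: numeral_3_eq_3 numeral_2_eq_2 algebra_simps power2_eq_square)
  then show ?case using Suc by (simp add: numeral_3_eq_3 numeral_2_eq_2)
qed simp

lemma coprime_F_Suc: "coprime (F k j) (F k (Suc j))"
proof (induction j)
  case (Suc j)
  have "gcd (F k (Suc j)) (F k (Suc (Suc j))) = gcd (F k (Suc j)) (F k j)"
    by (simp add: gcd_add_mult)
  then show ?case using Suc by (simp add: coprime_iff_gcd_eq_1 gcd.commute)
qed simp

lemma F_odd_mod: "F k (2 * i + 1) mod k = 1 mod k"
proof (induction i)
  case (Suc i)
  have "F k (2 * Suc i + 1) = k * F k (2 * i + 2) + F k (2 * i + 1)"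
    by (simp add: numeral_2_eq_2)
  then show ?case using Suc by simp
qed simp

lemma F_cassini_even:
  assumes "even n" "n \<ge> 2"
  shows "int (F k (n + 1)) * int (F k (n - 1)) = int (F k n)^2 + 1"
proof -
  have "n - 1 + 2 = n + 1" "n - 1 + 1 = n"
    using assms by simp_all
  then show ?thesis
    using F_cassini[of k "n - 1"] assms by simp
qed

lemma coprime_F_pred_Suc:
  assumes "even n" "n \<ge> 2"
  shows "coprime (F k (n - 1)) (F k (n + 1))"
proof -
  have "\<exists>i. n - 1 = 2 * i + 1 \<and> n = 2 * i + 2 \<and> n + 1 = 2 * i + 3"
    using assms by presburger
  then obtain i where n: "n - 1 = 2 * i + 1" "n = 2 * i + 2" "n + 1 = 2 * i + 3"
    by blast
  have "coprime (F k (2 * i + 1)) k"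
    using F_odd_mod[of k i] by (metis coprime_1_left coprime_mod_left_iff mod_by_0 mod_0)
  moreover have "coprime (F k (2 * i + 1)) (F k (2 * i + 2))"
    using coprime_F_Suc[of k "2 * i + 1"] by simp
  ultimately have "coprime (F k (2 * i + 1)) (k * F k (2 * i + 2) + F k (2 * i + 1))"
    by (metis add.commute coprime_iff_gcd_eq_1 coprime_mult_right_iff gcd_add2)
  moreover have "F k (2 * i + 3) = k * F k (2 * i + 2) + F k (2 * i + 1)"
    by (simp add: numeral_3_eq_3 numeral_2_eq_2)
  ultimately show ?thesis
    unfolding n by simp
qed

lemma zero_second_difference_imp_linear:
  fixes g :: "nat \<Rightarrow> real"
  assumes "\<And>t. g (t + 2 * N) - 2 * g (t + N) + g t = 0"
  shows "g (r + s * N) = g r + real s * (g (r + N) - g r)"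
proof -
  have step: "g (r + Suc s * N) - g (r + s * N) = g (r + N) - g r" for s
  proof (induction s)
    case (Suc s)
    have "r + Suc (Suc s) * N = r + s * N + 2 * N" "r + Suc s * N = r + s * N + N"
      by simp_all
    then have "g (r + Suc (Suc s) * N) - 2 * g (r + Suc s * N) + g (r + s * N) = 0"
      using assms by presburger
    with Suc show ?case by linarith
  qed simp
  show ?thesis
  proof (induction s)
    case (Suc s)
    then show ?case
      using step[of s] by (simp add: algebra_simps)
  qed simp
qed

lemma quasi_period_if_second_difference_const:
  fixes f :: "nat \<Rightarrow> real"
  assumes "N > 0" and second_diff: "\<And>t. f (t + 2 * N) - 2 * f (t + N) + f t = C"
  shows "quasi_period N f"
proof -
  \<comment> \<open>Removing the quadratic part leaves a function that is affine on each residue class mod \<open>N\<close>.\<close>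
  define g where "g t = f t - C * real t ^ 2 / (2 * real N ^ 2)" for t
  have "g (t + 2 * N) - 2 * g (t + N) + g t = 0" for t
  proof -
    have "real (t + 2 * N) ^ 2 - 2 * real (t + N) ^ 2 + real t ^ 2 = 2 * real N ^ 2"
      by (simp add: power2_eq_square algebra_simps)
    moreover have "g (t + 2 * N) - 2 * g (t + N) + g t
      = (f (t + 2 * N) - 2 * f (t + N) + f t)
        - C / (2 * real N ^ 2) * (real (t + 2 * N) ^ 2 - 2 * real (t + N) ^ 2 + real t ^ 2)"
      unfolding g_def by (simp add: algebra_simps)
    ultimately show ?thesis using \<open>N > 0\<close> second_diff[of t] by simp
  qed
  note g_linear = zero_second_difference_imp_linear[OF this]
  define c :: "nat \<Rightarrow> nat \<Rightarrow> real" where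
    "c i t = (let r = t mod N; slope = (g (r + N) - g r) / N in
       if i = 0 then g r - real r * slope else if i = 1 then slope else C / (2 * real N ^ 2))"
    for i t
  have "f t = (\<Sum>i\<le>2. c i t * real t ^ i)" for t
  proof -
    define r where "r = t mod N"
    define s where "s = t div N"
    have t: "t = r + s * N" unfolding r_def s_def by simp
    have "f t = g t + C * real t ^ 2 / (2 * real N ^ 2)"
      by (simp add: g_def)
    also have "\<dots> = g r + real s * (g (r + N) - g r) + C * real t ^ 2 / (2 * real N ^ 2)"
      using g_linear[of r s] t by simp
    also have "\<dots> = (\<Sum>i\<le>2. c i t * real t ^ i)"
      unfolding c_def r_def[symmetric] Let_def using \<open>N > 0\<close>
      by (simp add: numeral_2_eq_2 t field_simps)
    finally show ?thesis .
  qed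
  moreover have "c i (t + N) = c i t" for i t
    unfolding c_def by simp
  ultimately show ?thesis
    unfolding quasi_period_def by blast
qed

lemma bij_betw_coprime_linear_form:
  fixes m b :: int
  assumes "b > 0" "coprime m b"
  shows "bij_betw (\<lambda>(x, y). m * x + b * y) ({0..<b} \<times> UNIV) UNIV"
proof (rule bij_betwI')
  let ?f = "\<lambda>(x, y). m * x + b * y"
  fix p p' :: "int \<times> int" assume "p \<in> {0..<b} \<times> UNIV" "p' \<in> {0..<b} \<times> UNIV"
  then obtain x y x' y' where p: "p = (x, y)" "p' = (x', y')" "0 \<le> x" "x < b" "0 \<le> x'" "x' < b"
    by auto
  show "(?f p = ?f p') = (p = p')"
  proof
    assume "?f p = ?f p'"
    then have eq: "m * (x - x') = b * (y' - y)"
      using p by (simp add: algebra_simps)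
    then have "b dvd x - x'"
      using \<open>coprime m b\<close> by (metis coprime_commute coprime_dvd_mult_right_iff dvd_triv_left)
    then have "x = x'"
      using p by (metis mod_eq_dvd_iff mod_pos_pos_trivial)
    then show "p = p'"
      using eq p \<open>b > 0\<close> by simp
  qed simp
next
  fix w :: int
  obtain u v where "u * m + v * b = 1"
    using bezout_int[of m b] \<open>coprime m b\<close> by auto
  define x where "x = (w * u) mod b"
  have "w - m * x = b * (w * v + m * ((w * u) div b))"
  proof -
    have "w - m * x = w * (u * m + v * b) - m * (w * u - b * ((w * u) div b))"
      unfolding x_def using \<open>u * m + v * b = 1\<close> by (simp add: minus_div_mult_eq_mod[symmetric])
    then show ?thesis by (simp add: algebra_simps)
  qed
  then have "w = m * x + b * ((w - m * x) div b)"
    using \<open>b > 0\<close> by simp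
  moreover have "x \<in> {0..<b}"
    unfolding x_def using \<open>b > 0\<close> by simp
  ultimately show "\<exists>p \<in> {0..<b} \<times> UNIV. w = (\<lambda>(x, y). m * x + b * y) p"
    by (intro bexI[of _ "(x, (w - m * x) div b)"]) auto
qed simp

lemma mult_diff_le_mult_iff:
  fixes b w x K :: int
  assumes "0 \<le> x" "x < b"
  shows "b * w - x \<le> K * b \<longleftrightarrow> w \<le> K"
proof
  assume "b * w - x \<le> K * b"
  then have "b * w < b * (K + 1)"
    using assms by (simp add: algebra_simps)
  then show "w \<le> K"
    using assms by (simp add: mult_less_cancel_left)
next
  assume "w \<le> K"
  then have "w * b \<le> K * b"
    using assms by simp
  then show "b * w - x \<le> K * b"
    unfolding mult.commute[of b w] using assms by linarith
qed

lemma bij_betw_restrict_preimage: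
  assumes "bij_betw f A UNIV"
  shows "bij_betw f {x \<in> A. f x \<in> W} W"
proof (rule bij_betw_subset[OF assms])
  show "f ` {x \<in> A. f x \<in> W} = W"
  proof
    show "W \<subseteq> f ` {x \<in> A. f x \<in> W}"
    proof
      fix w assume "w \<in> W"
      moreover obtain x where "x \<in> A" "w = f x"
        using bij_betw_imp_surj_on[OF assms] by blast
      ultimately show "w \<in> f ` {x \<in> A. f x \<in> W}"
        by blast
    qed
  qed auto
qed auto

text \<open>The lattice points of the \<open>t\<close>-th dilate of the triangle with vertices
  \<open>(0, 0)\<close>, \<open>(b / a, 0)\<close>, \<open>(0, a / b)\<close>.\<close>
definition lattice_triangle :: "int \<Rightarrow> int \<Rightarrow> int \<Rightarrow> (int \<times> int) set" where
  "lattice_triangle a b t = {(x, y). 0 \<le> x \<and> 0 \<le> y \<and> a^2 * x + b^2 * y \<le> t * a * b}"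

definition lattice_strip :: "int \<Rightarrow> int \<Rightarrow> int \<Rightarrow> (int \<times> int) set" where
  "lattice_strip a b t = {(x, y). 0 \<le> x \<and> x < b \<and>
     (t + a) * a * b < a^2 * x + b^2 * y \<and> a^2 * x + b^2 * y \<le> (t + 2 * a) * a * b}"

lemma finite_lattice_triangle:
  assumes "a > 0" "b > 0"
  shows "finite (lattice_triangle a b t)"
proof (rule finite_subset)
  have "1 \<le> a^2" "1 \<le> b^2"
    using assms by (auto intro: one_le_power)
  then have "x \<le> a^2 * x" "y \<le> b^2 * y" if "0 \<le> x" "0 \<le> y" for x y
    using that mult_right_mono[of 1 "a^2" x] mult_right_mono[of 1 "b^2" y] by simp_all
  then show "lattice_triangle a b t \<subseteq> {0..t * a * b} \<times> {0..t * a * b}"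
    unfolding lattice_triangle_def by fastforce
qed simp

lemma lattice_triangle_mono:
  assumes "a > 0" "b > 0" "t \<le> s"
  shows "lattice_triangle a b t \<subseteq> lattice_triangle a b s"
proof -
  have "t * a * b \<le> s * a * b"
    using assms by (simp add: mult_right_mono)
  then show ?thesis
    unfolding lattice_triangle_def by auto
qed

lemma card_lattice_strip:
  assumes "a > 0" "b > 0" "m * b = a^2 + 1" "coprime m b"
  shows "card (lattice_strip a b t) = nat (a^2)"
proof -
  let ?f = "\<lambda>(x, y). m * x + b * y"
  let ?W = "{(t + a) * a<..(t + 2 * a) * a}"
  have quadratic_form: "a^2 * x + b^2 * y = b * (m * x + b * y) - x" for x y
  proof -
    have "a^2 = m * b - 1"
      using assms(3) by simp
    then show ?thesis
      by (simp only:) (simp add: algebra_simps power2_eq_square)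
  qed
  have "(x, y) \<in> lattice_strip a b t \<longleftrightarrow> (x, y) \<in> {0..<b} \<times> UNIV \<and> ?f (x, y) \<in> ?W" for x y
    unfolding lattice_strip_def quadratic_form
    using mult_diff_le_mult_iff[of x b "m * x + b * y" "(t + a) * a"]
      mult_diff_le_mult_iff[of x b "m * x + b * y" "(t + 2 * a) * a"]
    by (auto simp: not_le[symmetric])
  then have strip: "lattice_strip a b t = {p \<in> {0..<b} \<times> UNIV. ?f p \<in> ?W}"
    by auto
  have "bij_betw ?f (lattice_strip a b t) ?W"
    unfolding strip by (rule bij_betw_restrict_preimage[OF bij_betw_coprime_linear_form[OF assms(2,4)]])
  then have "card (lattice_strip a b t) = card ?W"
    by (rule bij_betw_same_card)
  then show ?thesis
    by (simp add: algebra_simps power2_eq_square)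
qed

lemma lattice_triangle_layer_decomp:
  assumes "a > 0" "b > 0" "t \<ge> 0"
  shows "lattice_triangle a b (t + 2 * a) - lattice_triangle a b (t + a)
       = (\<lambda>(x, y). (x + b, y)) ` (lattice_triangle a b (t + a) - lattice_triangle a b t)
         \<union> lattice_strip a b t"
    (is "?new = ?shifted \<union> ?strip")
proof -
  have shift: "a^2 * (x + b) + b^2 * y = (a^2 * x + b^2 * y) + a * a * b" for x y :: int
    by (simp add: algebra_simps power2_eq_square)
  have levels: "(t + 2 * a) * a * b = (t + a) * a * b + a * a * b" "(t + a) * a * b = t * a * b + a * a * b"
    by (simp_all add: algebra_simps)
  have pointwise: "(x, y) \<in> ?new \<longleftrightarrow> (x, y) \<in> ?shifted \<or> (x, y) \<in> ?strip" for x y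
  proof (cases "x < b")
    case True
    have "a^2 * x < a^2 * b" "a^2 * b \<le> (t + a) * a * b"
      using True assms by (simp_all add: algebra_simps power2_eq_square)
    then have "(t + a) * a * b < a^2 * x + b^2 * y \<Longrightarrow> 0 < b^2 * y"
      by linarith
    then have "(t + a) * a * b < a^2 * x + b^2 * y \<Longrightarrow> 0 < y"
      by (simp add: zero_less_mult_iff)
    then show ?thesis
      using True unfolding lattice_triangle_def lattice_strip_def by auto
  next
    case False
    have "(x, y) \<in> ?shifted \<longleftrightarrow> (x - b, y) \<in> lattice_triangle a b (t + a) - lattice_triangle a b t"
      by (auto intro!: image_eqI[of _ _ "(x - b, y)"])
    then show ?thesis
      using False assms shift[of "x - b" y] levels unfolding lattice_triangle_def lattice_strip_def by auto
  qed
  show ?thesis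
  proof (rule set_eqI)
    fix p :: "int \<times> int"
    show "p \<in> ?new \<longleftrightarrow> p \<in> ?shifted \<union> ?strip"
      using pointwise[of "fst p" "snd p"] by simp
  qed
qed

lemma second_difference_card_lattice_triangle:
  assumes "a > 0" "b > 0" "m * b = a^2 + 1" "coprime m b" "t \<ge> 0"
  shows "int (card (lattice_triangle a b (t + 2 * a))) - 2 * int (card (lattice_triangle a b (t + a)))
       + int (card (lattice_triangle a b t)) = a^2"
proof -
  let ?T = "lattice_triangle a b"
  let ?shift = "\<lambda>(x, y). (x + b, y)"
  have layer: "int (card (?T s' - ?T s)) = int (card (?T s')) - int (card (?T s))" if "s \<le> s'" for s s'
  proof -
    have "?T s \<subseteq> ?T s'"
      using assms that by (intro lattice_triangle_mono)
    then show ?thesis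
      using finite_lattice_triangle[OF assms(1,2)] by (simp add: card_Diff_subset card_mono of_nat_diff)
  qed
  have "b \<le> fst p" if "p \<in> ?shift ` (?T (t + a) - ?T t)" for p
    using that unfolding lattice_triangle_def by auto
  moreover have "fst p < b" if "p \<in> lattice_strip a b t" for p
    using that unfolding lattice_strip_def by auto
  ultimately have "?shift ` (?T (t + a) - ?T t) \<inter> lattice_strip a b t = {}"
    by fastforce
  moreover have "finite (lattice_strip a b t)"
    using card_lattice_strip[OF assms(1-4)] assms(1) by (intro card_ge_0_finite) simp
  moreover have "inj_on ?shift (?T (t + a) - ?T t)"
    by (auto intro: inj_onI)
  ultimately have "card (?T (t + 2 * a) - ?T (t + a)) = card (?T (t + a) - ?T t) + card (lattice_strip a b t)"
    unfolding lattice_triangle_layer_decomp[OF assms(1,2,5)]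
    using finite_lattice_triangle[OF assms(1,2)] by (simp add: card_Un_disjoint card_image)
  then have "int (card (?T (t + 2 * a) - ?T (t + a))) = int (card (?T (t + a) - ?T t)) + a^2"
    using card_lattice_strip[OF assms(1-4)] by simp
  then show ?thesis
    using layer[of t "t + a"] layer[of "t + a" "t + 2 * a"] assms(1) by linarith
qed

lemma quasi_period_card_lattice_triangle:
  assumes "a > 0" "b > 0" "m * b = a^2 + 1" "coprime m b"
  shows "quasi_period (nat a) (\<lambda>t. real (card (lattice_triangle a b (int t))))"
proof (rule quasi_period_if_second_difference_const[where C = "of_int (a^2)"])
  fix t :: nat
  have shifts: "int (t + 2 * nat a) = int t + 2 * a" "int (t + nat a) = int t + a"
    using assms(1) by simp_all
  have "int (card (lattice_triangle a b (int (t + 2 * nat a))))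
      - 2 * int (card (lattice_triangle a b (int (t + nat a))))
      + int (card (lattice_triangle a b (int t))) = a^2"
    unfolding shifts by (rule second_difference_card_lattice_triangle[OF assms]) simp
  then have "real_of_int (int (card (lattice_triangle a b (int (t + 2 * nat a))))
      - 2 * int (card (lattice_triangle a b (int (t + nat a))))
      + int (card (lattice_triangle a b (int t)))) = of_int (a^2)"
    by simp
  then show "real (card (lattice_triangle a b (int (t + 2 * nat a))))
      - 2 * real (card (lattice_triangle a b (int (t + nat a))))
      + real (card (lattice_triangle a b (int t))) = of_int (a^2)"
    by simp
qed (use assms(1) in simp)

lemma mem_scaled_right_triangle:
  fixes \<alpha> \<beta> t x y :: real
  assumes "\<alpha> > 0" "\<beta> > 0" "t \<ge> 0"
  shows "(x, y) \<in> (\<lambda>p. t *\<^sub>R p) ` (convex hull {(0, 0), (\<alpha>, 0), (0, \<beta>)})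
     \<longleftrightarrow> 0 \<le> x \<and> 0 \<le> y \<and> x / \<alpha> + y / \<beta> \<le> t"
proof
  assume "(x, y) \<in> (\<lambda>p. t *\<^sub>R p) ` (convex hull {(0, 0), (\<alpha>, 0), (0, \<beta>)})"
  then obtain u v w where "0 \<le> u" "0 \<le> v" "0 \<le> w" "u + v + w = 1"
      and xy: "x = t * v * \<alpha>" "y = t * w * \<beta>"
    unfolding convex_hull_3 by auto
  moreover have "t * (v + w) \<le> t"
    using \<open>t \<ge> 0\<close> \<open>0 \<le> u\<close> \<open>u + v + w = 1\<close> by (simp add: mult_left_le)
  ultimately show "0 \<le> x \<and> 0 \<le> y \<and> x / \<alpha> + y / \<beta> \<le> t"
    using assms by (simp add: algebra_simps)
next
  assume xy: "0 \<le> x \<and> 0 \<le> y \<and> x / \<alpha> + y / \<beta> \<le> t"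
  show "(x, y) \<in> (\<lambda>p. t *\<^sub>R p) ` (convex hull {(0, 0), (\<alpha>, 0), (0, \<beta>)})"
  proof (cases "t = 0")
    case True
    have "0 \<le> x / \<alpha>" "0 \<le> y / \<beta>"
      using xy assms by simp_all
    then have "x / \<alpha> = 0" "y / \<beta> = 0"
      using xy True by linarith+
    then have "x = 0" "y = 0"
      using assms by simp_all
    moreover have "(0, 0) \<in> convex hull {(0, 0), (\<alpha>, 0), (0::real, \<beta>::real)}"
      by (simp add: hull_inc)
    ultimately show ?thesis
      using True by (intro image_eqI[where x = "(0, 0)"]) (simp_all add: zero_prod_def)
  next
    case False
    define v where "v = x / (t * \<alpha>)"
    define w where "w = y / (t * \<beta>)"
    have "v + w = (x / \<alpha> + y / \<beta>) / t"
      unfolding v_def w_def by (simp add: add_divide_distrib mult.commute)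
    then have "v + w \<le> 1"
      using xy False assms by (simp add: divide_le_eq_1)
    moreover have "0 \<le> v" "0 \<le> w"
      unfolding v_def w_def using xy assms by simp_all
    ultimately have "(1 - v - w) *\<^sub>R (0, 0) + v *\<^sub>R (\<alpha>, 0) + w *\<^sub>R (0, \<beta>)
        \<in> convex hull {(0, 0), (\<alpha>, 0), (0::real, \<beta>::real)}"
      unfolding convex_hull_3 mem_Collect_eq
      by (intro exI[of _ "1 - v - w"] exI[of _ v] exI[of _ w]) auto
    moreover have "(x, y) = t *\<^sub>R ((1 - v - w) *\<^sub>R (0, 0) + v *\<^sub>R (\<alpha>, 0) + w *\<^sub>R (0, \<beta>))"
      unfolding v_def w_def using False assms by simp
    ultimately show ?thesis by blast
  qed
qed

lemma lattice_points_scaled_triangle: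
  fixes c d t :: nat
  assumes "c > 0" "d > 0"
  shows "{p :: int \<times> int. (real_of_int (fst p), real_of_int (snd p))
            \<in> (\<lambda>x. real t *\<^sub>R x) ` (convex hull {(0, 0), (real c / real d, 0), (0, real d / real c)})}
       = lattice_triangle (int d) (int c) (int t)"
proof -
  have "x / (c / d) + y / (d / c) \<le> t \<longleftrightarrow> d^2 * x + c^2 * y \<le> t * d * c" for x y :: real
    using assms by (simp add: field_simps power2_eq_square)
  moreover have "real d ^ 2 * real_of_int x + real c ^ 2 * real_of_int y \<le> real t * real d * real c
      \<longleftrightarrow> int d ^ 2 * x + int c ^ 2 * y \<le> int t * int d * int c" for x y
    by (metis (mono_tags) of_int_add of_int_le_iff of_int_mult of_int_of_nat_eq of_int_power)
  ultimately show ?thesis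
    unfolding lattice_triangle_def using assms
    by (auto simp: mem_scaled_right_triangle)
qed

lemma card_lattice_triangle_swap: "card (lattice_triangle a b t) = card (lattice_triangle b a t)"
proof -
  have "lattice_triangle a b t = prod.swap ` lattice_triangle b a t"
    unfolding lattice_triangle_def by (auto simp: algebra_simps image_iff)
  then show ?thesis
    by (simp add: card_image)
qed

lemma I_eq_card_lattice_triangle:
  assumes "k \<ge> 1" "n \<ge> 2"
  shows "I k n t = card (lattice_triangle (int (F k n)) (int (F k (n - 1))) (int t))"
  unfolding I_def triangle_def
  using lattice_points_scaled_triangle[of "F k (n - 1)" "F k n"] F_pos assms by simp

theorem theorem3p2:
  fixes k n :: nat
  assumes "k \<ge> 1" and "even n" and "n \<ge> 2"
  shows "quasi_period (F k n) (\<lambda>t. real (I k n t)) \<and>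
         quasi_period (F k n) (\<lambda>t. real (I k (n + 1) t))"
proof -
  define a b c where "a = int (F k n)" and "b = int (F k (n - 1))" and "c = int (F k (n + 1))"
  have "a > 0" "b > 0" "c > 0"
    unfolding a_def b_def c_def using F_pos assms by auto
  moreover have "c * b = a^2 + 1"
    unfolding a_def b_def c_def by (rule F_cassini_even[OF assms(2,3)])
  moreover have "coprime b c"
    unfolding b_def c_def coprime_int_iff by (rule coprime_F_pred_Suc[OF assms(2,3)])
  ultimately have "quasi_period (nat a) (\<lambda>t. real (card (lattice_triangle a b (int t))))"
    "quasi_period (nat a) (\<lambda>t. real (card (lattice_triangle a c (int t))))"
    by (auto intro!: quasi_period_card_lattice_triangle simp: ac_simps coprime_commute)
  moreover have "I k n t = card (lattice_triangle a b (int t))"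
    "I k (n + 1) t = card (lattice_triangle a c (int t))" for t
    using I_eq_card_lattice_triangle[of k n t] I_eq_card_lattice_triangle[of k "n + 1" t] assms
    unfolding a_def b_def c_def by (simp_all add: card_lattice_triangle_swap)
  ultimately show ?thesis
    unfolding a_def by simp
qed

end
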